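(* Let $\mathcal{D}=\mathcal{P}_{\mathcal{D}}\cup\mathcal{L}_{\mathcal{D}}$ be a dominating set of the incidence graph of an arbitrary projective plane $\Pi_q$ of order $q$. Then $|\mathcal{D}|\geq q^2+q-(q-1)|\mathcal{P}_{\mathcal{D}}|$ and $|\mathcal{D}|\geq q^2+q-(q-1)|\mathcal{L}_{\mathcal{D}}|$. In particular, if $|\mathcal{D}|<3q-1$, then $|\mathcal{P}_{\mathcal{D}}|\geq q$ and $|\mathcal{L}_{\mathcal{D}}|\geq q$. *)

theory Defs
  imports Main
begin

definition projective_plane :: "'p set \<Rightarrow> 'l set \<Rightarrow> ('p \<Rightarrow> 'l \<Rightarrow> bool) \<Rightarrow> bool" where
  "projective_plane P L I \<longleftrightarrow>
     finite P \<and> finite L \<and>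
     (\<forall>x\<in>P. \<forall>y\<in>P. x \<noteq> y \<longrightarrow> (\<exists>!l. l \<in> L \<and> I x l \<and> I y l)) \<and>
     (\<forall>l\<in>L. \<forall>m\<in>L. l \<noteq> m \<longrightarrow> (\<exists>!x. x \<in> P \<and> I x l \<and> I x m)) \<and>
     (\<exists>S. S \<subseteq> P \<and> card S = 4 \<and> (\<forall>l\<in>L. card {x\<in>S. I x l} \<le> 2))"

definition projective_plane_of_order :: "'p set \<Rightarrow> 'l set \<Rightarrow> ('p \<Rightarrow> 'l \<Rightarrow> bool) \<Rightarrow> nat \<Rightarrow> bool" where
  "projective_plane_of_order P L I q \<longleftrightarrow>
     projective_plane P L I \<and> (\<forall>l\<in>L. card {x\<in>P. I x l} = q + 1)"

definition incidence_dominating :: "'p set \<Rightarrow> 'l set \<Rightarrow> ('p \<Rightarrow> 'l \<Rightarrow> bool) \<Rightarrow> 'p set \<Rightarrow> 'l set \<Rightarrow> bool" where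
  "incidence_dominating P L I PD LD \<longleftrightarrow>
     PD \<subseteq> P \<and> LD \<subseteq> L \<and>
     (\<forall>x\<in>P - PD. \<exists>l\<in>LD. I x l) \<and>
     (\<forall>l\<in>L - LD. \<exists>x\<in>PD. I x l)"

end

theory Submission
  imports Defs
begin

text \<open>Count incidences: since two points share exactly one line, the lines through
  the points of a nonempty point set \<open>K\<close> number at most \<open>q |K| + 1\<close>, each new point
  contributing at most \<open>q\<close> lines beyond the one joining it to an earlier point. If every
  line outside \<open>L\<^sub>D\<close> meets \<open>P\<^sub>D\<close>, this gives \<open>q\<^sup>2 + q + 1 \<le> |L| \<le> |L\<^sub>D| + q |P\<^sub>D| + 1\<close>,
  i.e. the first inequality; the second is its dual. If \<open>|P\<^sub>D| \<le> q - 1\<close>, the first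
  inequality forces \<open>|D| \<ge> q\<^sup>2 + q - (q - 1)\<^sup>2 = 3q - 1\<close>.\<close>

locale incidence_plane =
  fixes P :: "'p set" and L :: "'l set" and I :: "'p \<Rightarrow> 'l \<Rightarrow> bool"
  assumes finite_points: "finite P" and finite_lines: "finite L"
    and line_through_two:
      "\<And>x y. x \<in> P \<Longrightarrow> y \<in> P \<Longrightarrow> x \<noteq> y \<Longrightarrow> \<exists>!l. l \<in> L \<and> I x l \<and> I y l"
    and point_on_two:
      "\<And>l m. l \<in> L \<Longrightarrow> m \<in> L \<Longrightarrow> l \<noteq> m \<Longrightarrow> \<exists>!x. x \<in> P \<and> I x l \<and> I x m"
begin

lemma dual: "incidence_plane L P (\<lambda>l x. I x l)"
  by unfold_locales (simp_all add: finite_points finite_lines line_through_two point_on_two)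

lemma line_unique:
  assumes "x \<in> P" "y \<in> P" "x \<noteq> y" "l \<in> L" "m \<in> L" "I x l" "I y l" "I x m" "I y m"
  shows "l = m"
  using line_through_two[OF assms(1-3)] assms(4-) by blast

lemmas point_unique = incidence_plane.line_unique[OF dual]

lemma line_avoiding_point:
  assumes quadrangle: "S \<subseteq> P" "card S = 4" "\<forall>l\<in>L. card {x\<in>S. I x l} \<le> 2"
    and "x \<in> P"
  shows "\<exists>l\<in>L. \<not> I x l"
proof (rule ccontr)
  assume all_through_x: "\<not> (\<exists>l\<in>L. \<not> I x l)"
  have "finite S" using quadrangle(2) card.infinite by fastforce
  then have "3 \<le> card (S - {x})" using quadrangle(2) card_Diff_singleton_if[of S x] by auto
  then obtain T where "T \<subseteq> S - {x}" "card T = 3"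
    using obtain_subset_with_card_n[of 3 "S - {x}"] by blast
  then obtain a b c where abc: "T = {a, b, c}" "a \<noteq> b" "b \<noteq> c" "a \<noteq> c"
    "a \<in> S - {x}" "b \<in> S - {x}" "c \<in> S - {x}"
    unfolding card_3_iff by auto
  obtain l where l: "l \<in> L" "I a l" "I b l"
    using line_through_two[of a b] abc quadrangle(1) by blast
  obtain m where m: "m \<in> L" "I a m" "I c m"
    using line_through_two[of a c] abc quadrangle(1) by blast
  \<comment> \<open>both lines pass through \<open>x\<close> and \<open>a\<close>, so \<open>a, b, c\<close> are collinear\<close>
  have "l = m"
    using line_unique[of x a l m] all_through_x l m abc quadrangle(1) assms(4) by blast
  then have "T \<subseteq> {y\<in>S. I y l}" using l m abc by auto
  then have "3 \<le> card {y\<in>S. I y l}"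
    using \<open>finite S\<close> \<open>card T = 3\<close> card_mono[of "{y\<in>S. I y l}" T] by auto
  then show False using quadrangle(3) l(1) by fastforce
qed

lemma card_lines_through_eq_card_points_on:
  assumes "x \<in> P" "l \<in> L" "\<not> I x l"
  shows "card {m\<in>L. I x m} = card {y\<in>P. I y l}"
proof -
  define meet_l where "meet_l m = (THE y. y \<in> P \<and> I y m \<and> I y l)" for m
  have meet_l: "meet_l m \<in> P" "I (meet_l m) m" "I (meet_l m) l" if "m \<in> {m\<in>L. I x m}" for m
  proof -
    have "m \<noteq> l" using that assms by auto
    then show "meet_l m \<in> P" "I (meet_l m) m" "I (meet_l m) l"
      using theI'[OF point_on_two[of m l]] that assms(2) unfolding meet_l_def by auto
  qed
  have "bij_betw meet_l {m\<in>L. I x m} {y\<in>P. I y l}"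
  proof (rule bij_betwI')
    fix m1 m2 assume m: "m1 \<in> {m\<in>L. I x m}" "m2 \<in> {m\<in>L. I x m}"
    show "meet_l m1 = meet_l m2 \<longleftrightarrow> m1 = m2"
    proof
      assume eq: "meet_l m1 = meet_l m2"
      have "meet_l m1 \<noteq> x" using meet_l[OF m(1)] assms(3) by auto
      then show "m1 = m2"
        using line_unique[of x "meet_l m1" m1 m2] meet_l[OF m(1)] meet_l[OF m(2)] m assms(1)
        unfolding eq by auto
    qed simp
  next
    fix m assume "m \<in> {m\<in>L. I x m}"
    then show "meet_l m \<in> {y\<in>P. I y l}" using meet_l by blast
  next
    fix y assume y: "y \<in> {y\<in>P. I y l}"
    then have "y \<noteq> x" using assms by auto
    then obtain m where m: "m \<in> L" "I x m" "I y m"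
      using line_through_two[of x y] y assms(1) by blast
    then have "m \<noteq> l" using assms by auto
    then have "meet_l m = y"
      using point_on_two[of m l] m y assms(2) unfolding meet_l_def by (intro the1_equality) auto
    then show "\<exists>m\<in>{m\<in>L. I x m}. y = meet_l m" using m by auto
  qed
  then show ?thesis by (rule bij_betw_same_card)
qed

end

text \<open>Unlike the
  definition in \<open>Defs\<close>, these axioms are self-dual, which gives every bound for free with
  points and lines exchanged.\<close>

locale plane_of_order = incidence_plane +
  fixes q :: nat
  assumes points_nonempty: "P \<noteq> {}" and lines_nonempty: "L \<noteq> {}"
    and card_points_on_line: "\<And>l. l \<in> L \<Longrightarrow> card {x\<in>P. I x l} = q + 1"
    and card_lines_through_point: "\<And>x. x \<in> P \<Longrightarrow> card {l\<in>L. I x l} = q + 1"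
begin

lemma dual: "plane_of_order L P (\<lambda>l x. I x l) q"
  using incidence_plane.dual[OF incidence_plane_axioms]
  by (simp add: plane_of_order_def plane_of_order_axioms_def points_nonempty lines_nonempty
      card_points_on_line card_lines_through_point)

lemma card_lines_ge: "q * q + q + 1 \<le> card L"
proof -
  obtain l0 where l0: "l0 \<in> L" using lines_nonempty by blast
  define F where "F y = {l\<in>L. I y l} - {l0}" for y
  have F_disjoint: "F y \<inter> F z = {}" if "y \<in> {x\<in>P. I x l0}" "z \<in> {x\<in>P. I x l0}" "y \<noteq> z" for y z
    using that point_unique[of l0 _ y z] l0 unfolding F_def by blast
  have card_F: "card (F y) = q" if "y \<in> {x\<in>P. I x l0}" for y
    using that card_lines_through_point[of y] l0 finite_lines unfolding F_def by simp
  have "card (\<Union>y\<in>{x\<in>P. I x l0}. F y) = (\<Sum>y\<in>{x\<in>P. I x l0}. card (F y))"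
    using F_disjoint finite_points finite_lines unfolding F_def by (intro card_UN_disjoint) auto
  also have "\<dots> = (q + 1) * q" using card_F card_points_on_line[OF l0] by simp
  finally have "card (insert l0 (\<Union>y\<in>{x\<in>P. I x l0}. F y)) = (q + 1) * q + 1"
    using finite_lines unfolding F_def by (subst card_insert_disjoint) (auto intro: finite_subset)
  moreover have "insert l0 (\<Union>y\<in>{x\<in>P. I x l0}. F y) \<subseteq> L" using l0 unfolding F_def by auto
  ultimately have "(q + 1) * q + 1 \<le> card L" using card_mono[OF finite_lines] by metis
  then show ?thesis by (simp add: algebra_simps)
qed

lemma card_lines_meeting_le:
  assumes "K \<subseteq> P" "K \<noteq> {}"
  shows "card {l\<in>L. \<exists>x\<in>K. I x l} \<le> q * card K + 1"
proof -
  have "finite K" using assms(1) finite_points finite_subset by blast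
  then show ?thesis using assms(2,1)
  proof (induction K rule: finite_ne_induct)
    case (singleton x)
    then show ?case using card_lines_through_point[of x] by simp
  next
    case (insert x K)
    obtain y where "y \<in> K" using insert.hyps(2) by blast
    then have "x \<noteq> y" using insert.hyps(3) by auto
    then obtain j where j: "j \<in> L" "I x j" "I y j"
      using line_through_two[of x y] insert.prems \<open>y \<in> K\<close> by blast
    let ?old = "{l\<in>L. \<exists>z\<in>K. I z l}" and ?new = "{l\<in>L. I x l} - {j}"
    have "{l\<in>L. \<exists>z\<in>insert x K. I z l} \<subseteq> ?old \<union> ?new" using j \<open>y \<in> K\<close> by auto
    then have "card {l\<in>L. \<exists>z\<in>insert x K. I z l} \<le> card (?old \<union> ?new)"
      using finite_lines by (intro card_mono) auto
    also have "\<dots> \<le> card ?old + card ?new" by (rule card_Un_le)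
    also have "card ?new = q"
      using card_lines_through_point[of x] insert.prems j finite_lines by simp
    finally show ?case using insert.IH insert.prems insert.hyps(1,3) by simp
  qed
qed

lemma dominating_bound:
  assumes "PD \<subseteq> P" "LD \<subseteq> L" "\<forall>l\<in>L - LD. \<exists>x\<in>PD. I x l"
  shows "q * q + q \<le> card LD + q * card PD"
proof (cases "PD = {}")
  case True
  then have "LD = L" using assms by auto
  then show ?thesis using card_lines_ge by simp
next
  case False
  have "L - LD \<subseteq> {l\<in>L. \<exists>x\<in>PD. I x l}" using assms(3) by auto
  then have "card (L - LD) \<le> card {l\<in>L. \<exists>x\<in>PD. I x l}"
    using finite_lines by (intro card_mono) auto
  also have "\<dots> \<le> q * card PD + 1" using card_lines_meeting_le[OF assms(1) False] .
  finally have "card (L - LD) \<le> q * card PD + 1" .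
  moreover have "L = (L - LD) \<union> LD" using assms(2) by auto
  then have "card L \<le> card (L - LD) + card LD" by (metis card_Un_le)
  ultimately show ?thesis using card_lines_ge by linarith
qed

lemmas dominating_bound_dual = plane_of_order.dominating_bound[OF dual]

end

lemma plane_of_order_if_projective_plane_of_order:
  assumes "projective_plane_of_order P L I q"
  shows "plane_of_order P L I q"
proof -
  interpret incidence_plane P L I
    using assms by unfold_locales (auto simp: projective_plane_of_order_def projective_plane_def)
  obtain S where quadrangle: "S \<subseteq> P" "card S = 4" "\<forall>l\<in>L. card {x\<in>S. I x l} \<le> 2"
    using assms by (auto simp: projective_plane_of_order_def projective_plane_def)
  have card_points_on_line: "card {x\<in>P. I x l} = q + 1" if "l \<in> L" for l
    using assms that by (simp add: projective_plane_of_order_def)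
  have "P \<noteq> {}" using quadrangle(1,2) by auto
  moreover have "card {l\<in>L. I x l} = q + 1" if "x \<in> P" for x
    using line_avoiding_point[OF quadrangle that] card_lines_through_eq_card_points_on[OF that]
      card_points_on_line by metis
  moreover have "L \<noteq> {}" using line_avoiding_point[OF quadrangle] \<open>P \<noteq> {}\<close> by blast
  ultimately show ?thesis
    using card_points_on_line by unfold_locales auto
qed

lemma int_dominating_bound:
  fixes q k m :: nat
  assumes "q * q + q \<le> m + q * k"
  shows "int q ^ 2 + int q - (int q - 1) * int k \<le> int (k + m)"
proof -
  have "int q * int q + int q \<le> int m + int q * int k" using assms by (simp flip: of_nat_mult of_nat_add)
  then show ?thesis by (simp add: power2_eq_square algebra_simps)
qed

lemma small_dominating_set_large_part:
  fixes q k m :: nat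
  assumes bound: "q * q + q \<le> m + q * k" and small: "int (k + m) < 3 * int q - 1"
  shows "q \<le> k"
proof (rule ccontr)
  assume "\<not> q \<le> k"
  then have "int k \<le> int q - 1" "1 \<le> int q" by auto
  then have "(int q - 1) * int k \<le> (int q - 1) * (int q - 1)" by (simp add: mult_left_mono)
  moreover have "int q * int q + int q \<le> int m + int q * int k"
    using bound by (simp flip: of_nat_mult of_nat_add)
  ultimately show False using small by (simp add: algebra_simps)
qed

theorem proposition2:
  fixes P :: "'p set" and L :: "'l set" and I :: "'p \<Rightarrow> 'l \<Rightarrow> bool"
    and q :: nat and PD :: "'p set" and LD :: "'l set"
  assumes "projective_plane_of_order P L I q"
    and "incidence_dominating P L I PD LD"
  shows "int (card PD + card LD) \<ge> int q ^ 2 + int q - (int q - 1) * int (card PD) \<and>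
         int (card PD + card LD) \<ge> int q ^ 2 + int q - (int q - 1) * int (card LD) \<and>
         (int (card PD + card LD) < 3 * int q - 1 \<longrightarrow> card PD \<ge> q \<and> card LD \<ge> q)"
proof -
  interpret plane_of_order P L I q
    using plane_of_order_if_projective_plane_of_order[OF assms(1)] .
  have lines_bound: "q * q + q \<le> card LD + q * card PD"
    using assms(2) by (intro dominating_bound) (auto simp: incidence_dominating_def)
  have points_bound: "q * q + q \<le> card PD + q * card LD"
    using assms(2) by (intro dominating_bound_dual) (auto simp: incidence_dominating_def)
  show ?thesis
    using int_dominating_bound[OF lines_bound] int_dominating_bound[OF points_bound]
      small_dominating_set_large_part[OF lines_bound]
      small_dominating_set_large_part[OF points_bound]
    by (simp add: add.commute)
qed

end
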